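(* Let $\mathsf{C},\mathsf{E}$ be finite-dimensional Hilbert spaces and $\mathsf{A}\cong\mathsf{A}'$ finite-dimensional with $d=\dim\mathsf{A}$. For every operator $Y\in\mathcal{B}(\mathsf{A}'\otimes\mathsf{C}\otimes\mathsf{A}\otimes\mathsf{E})$, \[ \mathbf{E}_{U\sim\mathds{U}(\mathsf{A})}\|\Theta(Y)(U)\|_1\le\|Y\|_1,\qquad \mathbf{E}_{U\sim\mathds{U}(\mathsf{A})}\Big\|\Theta(Y)(U)-\mathbf{E}_{V\sim\mathds{U}(\mathsf{A})}\Theta(Y)(V)\Big\|_1\le 2\|Y\|_1 . \]
   Context: $|\Phi\rangle=d^{-1/2}\sum_i|i\rangle_{A'}|i\rangle_A$. $\Theta(Y)(U)=d^2\,(\langle\Phi|_{A'A}\otimes\mathds{1}_{CE})\,U_AYU_A^\dagger\,(|\Phi\rangle_{A'A}\otimes\mathds{1}_{CE})\in\mathcal{B}(\mathsf{C}\otimes\mathsf{E})$ for $U$ in the unitary group $\mathds{U}(\mathsf{A})$, $U_A$ acting on $\mathsf{A}$ only. $\mathbf{E}$ denotes Haar average. $\|\cdot\|_1$ is the trace norm. *)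

theory Defs
  imports "HOL-Probability.Probability"
begin

text \<open>Finite-dimensional Hilbert spaces are modelled by finite index types:
  A (and A' identified with A via the fixed basis used in Phi) by 'a, C by 'c, E by 'e.
  Operators are complex matrices complex^'n^'m (rows indexed by 'm).\<close>

definition adj :: "complex^'n^'m \<Rightarrow> complex^'m^'n" where
  "adj M = (\<chi> i j. cnj (M $ j $ i))"

definition unitary :: "complex^'n^'n \<Rightarrow> bool" where
  "unitary U \<longleftrightarrow> U ** adj U = mat 1 \<and> adj U ** U = mat 1"

definition psd :: "complex^'n^'n \<Rightarrow> bool" where
  "psd P \<longleftrightarrow> (\<forall>x::complex^'n.
      Im (\<Sum>i\<in>UNIV. cnj (x $ i) * (P *v x) $ i) = 0 \<and>
      Re (\<Sum>i\<in>UNIV. cnj (x $ i) * (P *v x) $ i) \<ge> 0)"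

definition mat_abs :: "complex^'n^'m \<Rightarrow> complex^'n^'n" where
  "mat_abs Z = (THE P. psd P \<and> P ** P = adj Z ** Z)"

definition trace_norm :: "complex^'n^'m \<Rightarrow> real" where
  "trace_norm Z = Re (trace (mat_abs Z))"

definition is_haar :: "(complex^'a^'a) measure \<Rightarrow> bool" where
  "is_haar \<mu> \<longleftrightarrow> prob_space \<mu> \<and> sets \<mu> = sets borel \<and>
     emeasure \<mu> {U. unitary U} = 1 \<and>
     (\<forall>V. unitary V \<longrightarrow> distr \<mu> borel (\<lambda>U. V ** U) = \<mu>)"

text \<open>U_A = 1_{A'} (x) 1_C (x) U (x) 1_E on A' (x) C (x) A (x) E.\<close>
definition embedA :: "complex^'a::finite^'a \<Rightarrow> complex^('a \<times> 'c::finite \<times> 'a \<times> 'e::finite)^('a \<times> 'c \<times> 'a \<times> 'e)" where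
  "embedA U = (\<chi> i j. case i of (a', c, a, e) \<Rightarrow> case j of (b', c2, b, e2) \<Rightarrow>
      if a' = b' \<and> c = c2 \<and> e = e2 then U $ a $ b else 0)"

text \<open>|Phi>_{A'A} (x) 1_{CE}, with |Phi> = d^{-1/2} sum_i |i>_{A'} |i>_A.\<close>
definition phi_iso :: "complex^('c::finite \<times> 'e::finite)^('a::finite \<times> 'c \<times> 'a \<times> 'e)" where
  "phi_iso = (\<chi> i j. case i of (a', c, a, e) \<Rightarrow> case j of (c2, e2) \<Rightarrow>
      if a' = a \<and> c = c2 \<and> e = e2 then complex_of_real (1 / sqrt (real CARD('a))) else 0)"

definition Theta :: "complex^('a::finite \<times> 'c::finite \<times> 'a \<times> 'e::finite)^('a \<times> 'c \<times> 'a \<times> 'e) \<Rightarrow> complex^'a^'a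
                      \<Rightarrow> complex^('c \<times> 'e)^('c \<times> 'e)" where
  "Theta Y U = (real CARD('a))^2 *\<^sub>R
      (adj (phi_iso :: complex^('c \<times> 'e)^('a \<times> 'c \<times> 'a \<times> 'e)) ** (embedA U ** Y ** adj (embedA U)) ** phi_iso)"

end

theory Submission
  imports Defs
begin

text \<open>Choose an orthonormal basis \<open>g\<close> of eigenvectors of \<open>Y\<^sup>* Y\<close>, so that
  \<open>\<parallel>Y\<parallel>\<^sub>1 = \<Sum>\<^sub>j \<parallel>Y g\<^sub>j\<parallel>\<close> and \<open>Y = \<Sum>\<^sub>j |Y g\<^sub>j\<rangle>\<langle>g\<^sub>j|\<close>. Then
  \<open>\<Theta>(Y)(U) = d\<^sup>2 \<Sum>\<^sub>j |\<phi>\<^sub>U(Y g\<^sub>j)\<rangle>\<langle>\<phi>\<^sub>U(g\<^sub>j)|\<close> with \<open>\<phi>\<^sub>U w = (\<langle>\<Phi>| \<otimes> 1) U\<^sub>A w\<close>, so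
  \<open>\<parallel>\<Theta>(Y)(U)\<parallel>\<^sub>1 \<le> d\<^sup>2 \<Sum>\<^sub>j \<parallel>\<phi>\<^sub>U(Y g\<^sub>j)\<parallel> \<parallel>\<phi>\<^sub>U(g\<^sub>j)\<parallel>\<close>. The Haar second moments
  \<open>E[U\<^sub>a\<^sub>b cnj(U\<^sub>a\<^sub>'\<^sub>b\<^sub>')] = \<delta>\<^sub>a\<^sub>a\<^sub>' \<delta>\<^sub>b\<^sub>b\<^sub>' / d\<close> give \<open>E \<parallel>\<phi>\<^sub>U w\<parallel>\<^sup>2 = \<parallel>w\<parallel>\<^sup>2 / d\<^sup>2\<close>, so by
  Cauchy--Schwarz this bound has mean at most \<open>\<Sum>\<^sub>j \<parallel>Y g\<^sub>j\<parallel> = \<parallel>Y\<parallel>\<^sub>1\<close>. The second inequality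
  follows from the triangle inequality and \<open>\<parallel>E \<Theta>\<parallel>\<^sub>1 \<le> E \<parallel>\<Theta>\<parallel>\<^sub>1\<close>, both consequences of the
  variational formula \<open>\<parallel>Z\<parallel>\<^sub>1 = max Re \<Sum>\<^sub>i \<langle>f\<^sub>i, Z e\<^sub>i\<rangle>\<close> over orthonormal bases \<open>e\<close> and
  pairwise orthogonal families \<open>f\<close> of vectors of norm at most one.\<close>

definition hinner :: "complex^'n \<Rightarrow> complex^'n \<Rightarrow> complex" where
  "hinner x y = (\<Sum>i\<in>UNIV. cnj (x $ i) * y $ i)"

lemma hinner_add_left: "hinner (x + y) z = hinner x z + hinner y z"
  by (simp add: hinner_def distrib_right sum.distrib)

lemma hinner_add_right: "hinner x (y + z) = hinner x y + hinner x z"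
  by (simp add: hinner_def distrib_left sum.distrib)

lemma hinner_diff_left: "hinner (x - y) z = hinner x z - hinner y z"
  by (simp add: hinner_def left_diff_distrib sum_subtractf)

lemma hinner_diff_right: "hinner x (y - z) = hinner x y - hinner x z"
  by (simp add: hinner_def right_diff_distrib sum_subtractf)

lemma hinner_minus_left: "hinner (- x) y = - hinner x y"
  by (simp add: hinner_def sum_negf)

lemma hinner_scale_left: "hinner (c *s x) y = cnj c * hinner x y"
  by (simp add: hinner_def sum_distrib_left algebra_simps)

lemma hinner_scale_right: "hinner x (c *s y) = c * hinner x y"
  by (simp add: hinner_def sum_distrib_left algebra_simps)

lemma hinner_zero_left [simp]: "hinner 0 x = 0"
  by (simp add: hinner_def)

lemma hinner_zero_right [simp]: "hinner x 0 = 0"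
  by (simp add: hinner_def)

lemma hinner_sum_left: "hinner (\<Sum>k\<in>K. f k) y = (\<Sum>k\<in>K. hinner (f k) y)"
  by (induction K rule: infinite_finite_induct) (auto simp: hinner_add_left)

lemma hinner_sum_right: "hinner x (\<Sum>k\<in>K. f k) = (\<Sum>k\<in>K. hinner x (f k))"
  by (induction K rule: infinite_finite_induct) (auto simp: hinner_add_right)

lemma cnj_hinner: "cnj (hinner x y) = hinner y x"
  by (simp add: hinner_def mult.commute)

lemma mult_cnj_self: "z * cnj z = (complex_of_real (cmod z))\<^sup>2"
  by (metis complex_norm_square of_real_power)

lemma cnj_mult_self: "cnj z * z = (complex_of_real (cmod z))\<^sup>2"
  by (metis mult_cnj_self mult.commute)

lemma hinner_self: "hinner x x = complex_of_real ((norm x)\<^sup>2)"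
proof -
  have "hinner x x = (\<Sum>i\<in>UNIV. complex_of_real ((cmod (x $ i))\<^sup>2))"
    unfolding hinner_def by (rule sum.cong) (auto simp: complex_norm_square[symmetric] mult.commute)
  also have "\<dots> = complex_of_real ((norm x)\<^sup>2)"
    by (simp add: norm_vec_def L2_set_def sum_nonneg)
  finally show ?thesis .
qed

lemma scaleR_eq_vector_scalar_mult: "r *\<^sub>R (x::complex^'n) = complex_of_real r *s x"
  by (simp add: vec_eq_iff complex_eq_iff)

lemma hinner_scaleR_left: "hinner (r *\<^sub>R x) y = complex_of_real r * hinner x y"
  by (simp add: scaleR_eq_vector_scalar_mult hinner_scale_left)

lemma hinner_scaleR_right: "hinner x (r *\<^sub>R y) = complex_of_real r * hinner x y"
  by (simp add: scaleR_eq_vector_scalar_mult hinner_scale_right)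

lemma matrix_vector_mult_scaleR: "(M::complex^'n^'m) *v (r *\<^sub>R x) = r *\<^sub>R (M *v x)"
  by (simp add: scaleR_eq_vector_scalar_mult vector_scalar_commute)

lemma scaleR_matrix_vector_mult: "((r::real) *\<^sub>R (M::complex^'n^'m)) *v x = r *\<^sub>R (M *v x)"
  by (simp add: vec_eq_iff matrix_vector_mult_def scaleR_sum_right)

lemma adj_nth [simp]: "adj M $ i $ j = cnj (M $ j $ i)"
  by (simp add: adj_def)

lemma adj_adj [simp]: "adj (adj M) = M"
  by (simp add: adj_def vec_eq_iff)

lemma hinner_adj_left: "hinner (adj M *v x) y = hinner x (M *v y)"
proof -
  have "hinner (adj M *v x) y = (\<Sum>i\<in>UNIV. \<Sum>j\<in>UNIV. M $ j $ i * cnj (x $ j) * y $ i)"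
    unfolding hinner_def matrix_vector_mult_def
    by (auto simp: sum_distrib_right sum_distrib_left mult_ac intro!: sum.cong)
  also have "\<dots> = (\<Sum>j\<in>UNIV. \<Sum>i\<in>UNIV. M $ j $ i * cnj (x $ j) * y $ i)"
    by (rule sum.swap)
  also have "\<dots> = hinner x (M *v y)"
    unfolding hinner_def matrix_vector_mult_def by (simp add: sum_distrib_left mult_ac)
  finally show ?thesis .
qed

lemma hinner_adj_right: "hinner x (adj M *v y) = hinner (M *v x) y"
  by (metis cnj_hinner hinner_adj_left)

section \<open>Spectral theorem for Hermitian matrices\<close>

definition hermitian :: "complex^'n^'n \<Rightarrow> bool" where
  "hermitian H \<longleftrightarrow> (\<forall>x y. hinner x (H *v y) = hinner (H *v x) y)"

lemma psdD: "psd P \<Longrightarrow> Im (hinner x (P *v x)) = 0 \<and> Re (hinner x (P *v x)) \<ge> 0"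
  unfolding psd_def hinner_def by blast

lemma psd_imp_hermitian:
  fixes P :: "complex^'n^'n"
  assumes "psd P"
  shows "hermitian P"
  unfolding hermitian_def
proof (intro allI)
  fix x y :: "complex^'n"
  define B :: "complex^'n \<Rightarrow> complex^'n \<Rightarrow> complex" where "B u v = hinner u (P *v v)" for u v
  have real: "Im (B u u) = 0" for u
    using psdD[OF assms] unfolding B_def by blast
  have sum: "B (x + y) (x + y) = B x x + B y y + B x y + B y x"
    unfolding B_def by (simp add: hinner_add_left hinner_add_right matrix_vector_right_distrib)
  have sum_i: "B (x + \<i> *s y) (x + \<i> *s y) = B x x + B y y + \<i> * B x y - \<i> * B y x"
    unfolding B_def by (simp add: hinner_add_left hinner_add_right matrix_vector_right_distrib
        vector_scalar_commute hinner_scale_left hinner_scale_right algebra_simps)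
  have Im: "Im (B x y + B y x) = 0"
    using real[of "x + y"] real[of x] real[of y] sum by simp
  have Re: "Re (B x y - B y x) = 0"
    using real[of "x + \<i> *s y"] real[of x] real[of y] sum_i by (simp add: algebra_simps)
  have "B x y = cnj (B y x)"
    using Im Re by (simp add: complex_eq_iff)
  then show "hinner x (P *v y) = hinner (P *v x) y"
    unfolding B_def by (simp add: cnj_hinner)
qed

lemma hermitian_quadratic_real:
  assumes "hermitian H"
  shows "Im (hinner x (H *v x)) = 0"
proof -
  have "hinner x (H *v x) = cnj (hinner x (H *v x))"
    using assms unfolding hermitian_def by (metis cnj_hinner)
  then show ?thesis
    by (metis cnj.simps(2) neg_equal_zero)
qed

lemma hermitian_adj_mult_self: "hermitian (adj Z ** Z)"
  unfolding hermitian_def by (metis hinner_adj_left hinner_adj_right matrix_vector_mul_assoc)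

lemma exists_nonzero_orthogonal:
  fixes e :: "'n::finite \<Rightarrow> complex^'n"
  assumes "I \<noteq> UNIV"
  shows "\<exists>x. x \<noteq> 0 \<and> (\<forall>j\<in>I. hinner (e j) x = 0)"
proof (rule ccontr)
  assume none: "\<not> ?thesis"
  define F :: "complex^'n^'n" where "F = (\<chi> j k. if j \<in> I then cnj (e j $ k) else 0)"
  have F_apply: "(F *v x) $ j = (if j \<in> I then hinner (e j) x else 0)" for x j
    unfolding F_def matrix_vector_mult_def hinner_def by simp
  have "F *v x = 0 \<Longrightarrow> x = 0" for x
    using none by (metis F_apply zero_index)
  then obtain B where "B ** F = mat 1"
    using matrix_left_invertible_ker(1) by blast
  then have FB: "F ** B = mat 1"
    using matrix_left_right_inverse by blast
  obtain i where "i \<notin> I"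
    using assms by blast
  then have "(F ** B) $ i $ i = 0"
    unfolding matrix_matrix_mult_def F_def by simp
  then show False
    using FB by (simp add: mat_def)
qed

lemma nonpos_if_le_mult_all_pos:
  fixes c k :: real
  assumes "\<And>t. t > 0 \<Longrightarrow> c \<le> t * k"
  shows "c \<le> 0"
proof (rule ccontr)
  assume "\<not> c \<le> 0"
  define t where "t = c / (2 * (\<bar>k\<bar> + 1))"
  have t: "t > 0" "t * (\<bar>k\<bar> + 1) = c / 2"
    using \<open>\<not> c \<le> 0\<close> unfolding t_def by (auto simp: field_simps)
  have "c \<le> t * \<bar>k\<bar>"
    using assms[OF t(1)] t(1) by (smt (verit) abs_ge_self mult_left_mono)
  also have "\<dots> < c"
    using t \<open>\<not> c \<le> 0\<close> by (simp add: distrib_left)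
  finally show False by simp
qed

lemma norm_add_scaleR_sq:
  fixes x y :: "complex^'n"
  shows "(norm (x + t *\<^sub>R y))\<^sup>2 = (norm x)\<^sup>2 + 2 * t * Re (hinner x y) + t\<^sup>2 * (norm y)\<^sup>2"
proof -
  have "hinner (x + t *\<^sub>R y) (x + t *\<^sub>R y) = hinner x x + complex_of_real t * hinner x y
      + complex_of_real t * cnj (hinner x y) + complex_of_real (t\<^sup>2) * hinner y y"
    by (simp add: hinner_add_left hinner_add_right hinner_scaleR_left hinner_scaleR_right
        cnj_hinner algebra_simps power2_eq_square)
  then have "Re (hinner (x + t *\<^sub>R y) (x + t *\<^sub>R y))
      = (norm x)\<^sup>2 + 2 * t * Re (hinner x y) + t\<^sup>2 * (norm y)\<^sup>2"
    by (simp add: hinner_self)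
  then show ?thesis
    by (simp add: hinner_self)
qed

lemma hermitian_quadratic_form_add_scaleR:
  assumes "hermitian H"
  shows "Re (hinner (x + t *\<^sub>R y) (H *v (x + t *\<^sub>R y)))
    = Re (hinner x (H *v x)) + 2 * t * Re (hinner x (H *v y)) + t\<^sup>2 * Re (hinner y (H *v y))"
proof -
  have "hinner y (H *v x) = cnj (hinner x (H *v y))"
    using assms unfolding hermitian_def by (metis cnj_hinner)
  then have "hinner (x + t *\<^sub>R y) (H *v (x + t *\<^sub>R y)) = hinner x (H *v x)
      + complex_of_real t * hinner x (H *v y) + complex_of_real t * cnj (hinner x (H *v y))
      + complex_of_real (t\<^sup>2) * hinner y (H *v y)"
    by (simp add: matrix_vector_right_distrib matrix_vector_mult_scaleR hinner_add_left
        hinner_add_right hinner_scaleR_left hinner_scaleR_right algebra_simps power2_eq_square)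
  then show ?thesis
    by simp
qed

text \<open>If a unit vector \<open>x\<^sub>0\<close> maximises the quadratic form of \<open>H\<close> on an \<open>H\<close>-invariant real
  subspace, then perturbing it along \<open>y = H x\<^sub>0 - \<lambda> x\<^sub>0\<close> shows that \<open>y\<close> must vanish.\<close>

lemma hermitian_maximizer_is_eigenvector:
  fixes H :: "complex^'n^'n" and S :: "(complex^'n) set"
  assumes herm: "hermitian H"
    and S_add: "\<And>x y. x \<in> S \<Longrightarrow> y \<in> S \<Longrightarrow> x + y \<in> S"
    and S_scaleR: "\<And>x r. x \<in> S \<Longrightarrow> r *\<^sub>R x \<in> S"
    and S_invariant: "\<And>x. x \<in> S \<Longrightarrow> H *v x \<in> S"
    and x0: "x0 \<in> S" "norm x0 = 1"
    and max: "\<And>z. z \<in> S \<Longrightarrow> Re (hinner z (H *v z)) \<le> Re (hinner x0 (H *v x0)) * (norm z)\<^sup>2"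
  shows "H *v x0 = Re (hinner x0 (H *v x0)) *\<^sub>R x0"
proof -
  define f where "f z = Re (hinner z (H *v z))" for z
  define lm where "lm = f x0"
  define y where "y = H *v x0 - lm *\<^sub>R x0"
  define a where "a = (norm y)\<^sup>2"
  have y_in_S: "y \<in> S"
    unfolding y_def using S_add S_scaleR S_invariant x0(1) by (metis scaleR_minus_left diff_conv_add_uminus)
  have Hx0: "hinner x0 (H *v x0) = complex_of_real lm"
    using hermitian_quadratic_real[OF herm, of x0] unfolding lm_def f_def by (simp add: complex_eq_iff)
  have x0y: "hinner x0 y = 0"
    unfolding y_def using x0(2) by (simp add: hinner_diff_right hinner_scaleR_right Hx0 hinner_self)
  have "hinner y (H *v x0) = complex_of_real a"
  proof -
    have "H *v x0 = y + lm *\<^sub>R x0" unfolding y_def by simp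
    moreover have "hinner y x0 = 0"
      using x0y by (metis cnj_hinner complex_cnj_zero)
    ultimately show ?thesis
      unfolding a_def by (simp add: hinner_add_right hinner_scaleR_right hinner_self)
  qed
  then have x0Hy: "Re (hinner x0 (H *v y)) = a"
    using herm unfolding hermitian_def by (metis Re_complex_of_real cnj_hinner complex_cnj_complex_of_real)
  have "2 * a \<le> t * (lm * a - f y)" if "t > 0" for t
  proof -
    have "x0 + t *\<^sub>R y \<in> S"
      using S_add S_scaleR x0(1) y_in_S by blast
    then have "f (x0 + t *\<^sub>R y) \<le> lm * (norm (x0 + t *\<^sub>R y))\<^sup>2"
      using max unfolding f_def lm_def by blast
    moreover have "f (x0 + t *\<^sub>R y) = lm + 2 * t * a + t\<^sup>2 * f y"
      unfolding f_def lm_def using hermitian_quadratic_form_add_scaleR[OF herm] x0Hy by simp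
    moreover have "(norm (x0 + t *\<^sub>R y))\<^sup>2 = 1 + t\<^sup>2 * a"
      using x0(2) x0y by (simp add: norm_add_scaleR_sq a_def)
    ultimately have "t * (2 * a) \<le> t * (t * (lm * a - f y))"
      by (simp add: algebra_simps power2_eq_square)
    then show ?thesis
      using \<open>t > 0\<close> by simp
  qed
  then have "2 * a \<le> 0"
    by (rule nonpos_if_le_mult_all_pos)
  then have "y = 0"
    unfolding a_def by simp
  then show ?thesis
    unfolding y_def lm_def f_def by simp
qed

lemma quadratic_form_attains_max_on_subspace:
  fixes H :: "complex^'n::finite^'n" and S :: "(complex^'n) set"
  assumes "closed S" and S_scaleR: "\<And>x r. x \<in> S \<Longrightarrow> r *\<^sub>R x \<in> S" and "x1 \<in> S" "x1 \<noteq> 0"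
  obtains x0 where "x0 \<in> S" "norm x0 = 1"
    "\<And>z. z \<in> S \<Longrightarrow> Re (hinner z (H *v z)) \<le> Re (hinner x0 (H *v x0)) * (norm z)\<^sup>2"
proof -
  define f where "f x = Re (hinner x (H *v x))" for x :: "complex^'n"
  define K where "K = S \<inter> sphere 0 1"
  have "compact K"
    unfolding K_def using \<open>closed S\<close> by (intro closed_Int_compact compact_sphere)
  moreover have "(1 / norm x1) *\<^sub>R x1 \<in> K"
    unfolding K_def using assms(3,4) S_scaleR by auto
  moreover have "continuous_on K f"
    unfolding f_def hinner_def matrix_vector_mult_def by (intro continuous_intros)
  ultimately obtain x0 where x0: "x0 \<in> K" and x0_max: "\<And>y. y \<in> K \<Longrightarrow> f y \<le> f x0"
    using continuous_attains_sup[of K f] by blast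
  have f_scaleR: "f (r *\<^sub>R z) = r\<^sup>2 * f z" for r z
    unfolding f_def by (simp add: matrix_vector_mult_scaleR hinner_scaleR_left
        hinner_scaleR_right power2_eq_square)
  have "f z \<le> f x0 * (norm z)\<^sup>2" if "z \<in> S" for z
  proof (cases "z = 0")
    case True
    then show ?thesis by (simp add: f_def)
  next
    case False
    then have "(1 / norm z) *\<^sub>R z \<in> K"
      using \<open>z \<in> S\<close> S_scaleR unfolding K_def by auto
    then have "f ((1 / norm z) *\<^sub>R z) \<le> f x0"
      by (rule x0_max)
    then have "(1 / norm z)\<^sup>2 * f z \<le> f x0"
      by (simp only: f_scaleR)
    then show ?thesis
      using False by (simp add: power_divide divide_le_eq mult.commute)
  qed
  then show ?thesis
    using that x0 unfolding K_def f_def by auto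
qed

lemma hermitian_eigenvector_orthogonal:
  fixes H :: "complex^'n::finite^'n" and e :: "'n \<Rightarrow> complex^'n"
  assumes herm: "hermitian H" and "I \<noteq> UNIV"
    and eig: "\<And>j. j \<in> I \<Longrightarrow> H *v e j = lam j *\<^sub>R e j"
  shows "\<exists>x \<mu>. norm x = 1 \<and> (\<forall>j\<in>I. hinner (e j) x = 0) \<and> H *v x = \<mu> *\<^sub>R x"
proof -
  define S where "S = {x::complex^'n. \<forall>j\<in>I. hinner (e j) x = 0}"
  have S_add: "x \<in> S \<Longrightarrow> y \<in> S \<Longrightarrow> x + y \<in> S" for x y
    unfolding S_def by (simp add: hinner_add_right)
  have S_scaleR: "x \<in> S \<Longrightarrow> r *\<^sub>R x \<in> S" for x r
    unfolding S_def by (simp add: hinner_scaleR_right)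
  have S_invariant: "H *v x \<in> S" if "x \<in> S" for x
  proof -
    have "hinner (e j) (H *v x) = 0" if "j \<in> I" for j
      using herm eig[OF that] \<open>x \<in> S\<close> \<open>j \<in> I\<close> unfolding hermitian_def S_def
      by (simp add: hinner_scaleR_left)
    then show ?thesis unfolding S_def by blast
  qed
  have "S = (\<Inter>j\<in>I. {x. hinner (e j) x = 0})"
    unfolding S_def by auto
  then have "closed S"
    unfolding hinner_def by (auto intro!: closed_INT closed_Collect_eq continuous_intros)
  moreover obtain x1 where "x1 \<in> S" "x1 \<noteq> 0"
    using exists_nonzero_orthogonal[OF \<open>I \<noteq> UNIV\<close>] unfolding S_def by blast
  ultimately obtain x0 where x0: "x0 \<in> S" "norm x0 = 1"
    and max: "\<And>z. z \<in> S \<Longrightarrow> Re (hinner z (H *v z)) \<le> Re (hinner x0 (H *v x0)) * (norm z)\<^sup>2"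
    using quadratic_form_attains_max_on_subspace[of S] S_scaleR by metis
  have "H *v x0 = Re (hinner x0 (H *v x0)) *\<^sub>R x0"
    by (rule hermitian_maximizer_is_eigenvector[OF herm S_add S_scaleR S_invariant x0 max])
  then show ?thesis
    using x0 unfolding S_def by blast
qed

definition onb :: "('n \<Rightarrow> complex^'n) \<Rightarrow> bool" where
  "onb e \<longleftrightarrow> (\<forall>i j. hinner (e i) (e j) = (if i = j then 1 else 0))"

lemma hermitian_eigenbasis:
  fixes H :: "complex^'n::finite^'n"
  assumes herm: "hermitian H"
  shows "\<exists>e lam. onb e \<and> (\<forall>i. H *v e i = lam i *\<^sub>R e i)"
proof -
  have "\<exists>e lam. (\<forall>i\<in>I. \<forall>j\<in>I. hinner (e i) (e j) = (if i = j then 1 else 0))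
      \<and> (\<forall>i\<in>I. H *v e i = lam i *\<^sub>R e i)" for I :: "'n set"
  proof (induction I rule: finite_induct[OF finite])
    case 1
    then show ?case by auto
  next
    case (2 k I)
    then obtain e lam where
      orth: "\<forall>i\<in>I. \<forall>j\<in>I. hinner (e i) (e j) = (if i = j then 1 else 0)" and
      eig: "\<forall>i\<in>I. H *v e i = lam i *\<^sub>R e i"
      by blast
    have "I \<noteq> UNIV" using 2 by blast
    then obtain x \<mu> where x: "norm x = 1" "\<forall>j\<in>I. hinner (e j) x = 0" "H *v x = \<mu> *\<^sub>R x"
      using hermitian_eigenvector_orthogonal[OF herm, of I e lam] eig by blast
    have "hinner x x = 1"
      using x(1) by (simp add: hinner_self)
    moreover have "\<forall>j\<in>I. hinner x (e j) = 0"
      using x(2) by (metis cnj_hinner complex_cnj_zero)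
    ultimately show ?case
      using orth eig x \<open>k \<notin> I\<close> by (intro exI[of _ "e(k := x)"] exI[of _ "lam(k := \<mu>)"]) auto
  qed
  from this[of UNIV] show ?thesis
    unfolding onb_def by blast
qed

lemma onb_norm:
  assumes "onb e"
  shows "norm (e i) = 1"
proof -
  have "hinner (e i) (e i) = 1"
    using assms unfolding onb_def by simp
  then have "complex_of_real ((norm (e i))\<^sup>2) = 1"
    by (simp only: hinner_self)
  then have "(norm (e i))\<^sup>2 = 1"
    using of_real_eq_1_iff by blast
  then show ?thesis
    by (smt (verit) norm_ge_zero power2_eq_1_iff)
qed

lemma onb_expansion:
  fixes e :: "'n::finite \<Rightarrow> complex^'n"
  assumes "onb e"
  shows "x = (\<Sum>i\<in>UNIV. hinner (e i) x *s e i)"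
proof -
  define E :: "complex^'n^'n" where "E = (\<chi> r c. e c $ r)"
  have "adj E ** E = mat 1"
    using assms unfolding onb_def E_def adj_def matrix_matrix_mult_def hinner_def mat_def
    by (simp add: vec_eq_iff)
  then have "E ** adj E = mat 1"
    using matrix_left_right_inverse by blast
  then have "x = E *v (adj E *v x)"
    by (simp add: matrix_vector_mul_assoc)
  also have "\<dots> = (\<Sum>i\<in>UNIV. hinner (e i) x *s e i)"
    unfolding E_def adj_def matrix_vector_mult_def hinner_def
    by (simp add: vec_eq_iff sum_component mult.commute)
  finally show ?thesis .
qed

lemma matrix_vector_mult_onb_expansion:
  fixes M :: "complex^'n::finite^'m"
  assumes "onb e"
  shows "M *v x = (\<Sum>i\<in>UNIV. hinner (e i) x *s (M *v e i))"
proof -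
  have "M *v x = M *v (\<Sum>i\<in>UNIV. hinner (e i) x *s e i)"
    using onb_expansion[OF assms] by metis
  then show ?thesis
    by (simp add: vec.sum vector_scalar_commute)
qed

lemma matrix_eq_onb:
  fixes A B :: "complex^'n::finite^'m"
  assumes "onb e" "\<And>i. A *v e i = B *v e i"
  shows "A = B"
  unfolding matrix_eq
proof
  fix x
  show "A *v x = B *v x"
    using assms(2) by (simp only: matrix_vector_mult_onb_expansion[OF assms(1), of A x]
        matrix_vector_mult_onb_expansion[OF assms(1), of B x])
qed

lemma hinner_sum_orthogonal_self:
  fixes f :: "'k \<Rightarrow> complex^'m"
  assumes "finite K" and orth: "\<And>i j. i \<in> K \<Longrightarrow> j \<in> K \<Longrightarrow> i \<noteq> j \<Longrightarrow> hinner (f i) (f j) = 0"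
  shows "hinner (\<Sum>i\<in>K. c i *s f i) (\<Sum>j\<in>K. c j *s f j)
    = (\<Sum>i\<in>K. complex_of_real ((cmod (c i))\<^sup>2 * (norm (f i))\<^sup>2))"
proof -
  have "hinner (\<Sum>i\<in>K. c i *s f i) (\<Sum>j\<in>K. c j *s f j)
      = (\<Sum>i\<in>K. \<Sum>j\<in>K. cnj (c i) * c j * hinner (f i) (f j))"
    by (simp add: hinner_sum_left hinner_sum_right hinner_scale_left hinner_scale_right
        sum_distrib_left mult_ac) (rule sum.swap)
  also have "\<dots> = (\<Sum>i\<in>K. \<Sum>j\<in>K. if j = i then cnj (c i) * c i * hinner (f i) (f i) else 0)"
    using orth by (intro sum.cong refl) auto
  also have "\<dots> = (\<Sum>i\<in>K. complex_of_real ((cmod (c i))\<^sup>2 * (norm (f i))\<^sup>2))"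
    using \<open>finite K\<close> by (simp add: cnj_mult_self hinner_self)
  finally show ?thesis .
qed

lemma Bessel_inequality:
  fixes f :: "'k \<Rightarrow> complex^'m"
  assumes "finite K" and orth: "\<And>i j. i \<in> K \<Longrightarrow> j \<in> K \<Longrightarrow> i \<noteq> j \<Longrightarrow> hinner (f i) (f j) = 0"
    and norm_le: "\<And>i. i \<in> K \<Longrightarrow> norm (f i) \<le> 1"
  shows "(\<Sum>i\<in>K. (cmod (hinner (f i) u))\<^sup>2) \<le> (norm u)\<^sup>2"
proof -
  define c where "c i = hinner (f i) u" for i
  have cross_left: "hinner u (\<Sum>i\<in>K. c i *s f i) = (\<Sum>i\<in>K. complex_of_real ((cmod (c i))\<^sup>2))"
  proof -
    have "hinner u (f i) = cnj (c i)" for i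
      unfolding c_def by (simp add: cnj_hinner)
    then show ?thesis
      by (simp add: hinner_sum_right hinner_scale_right mult_cnj_self)
  qed
  have cross_right: "hinner (\<Sum>i\<in>K. c i *s f i) u = (\<Sum>i\<in>K. complex_of_real ((cmod (c i))\<^sup>2))"
    by (simp add: hinner_sum_left hinner_scale_left c_def[symmetric] cnj_mult_self)
  define v where "v = u - (\<Sum>i\<in>K. c i *s f i)"
  have "hinner v v = hinner u u - (\<Sum>i\<in>K. complex_of_real ((cmod (c i))\<^sup>2))
      - (\<Sum>i\<in>K. complex_of_real ((cmod (c i))\<^sup>2))
      + (\<Sum>i\<in>K. complex_of_real ((cmod (c i))\<^sup>2 * (norm (f i))\<^sup>2))"
    unfolding v_def
    by (simp add: hinner_diff_left hinner_diff_right cross_left cross_right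
        hinner_sum_orthogonal_self[OF \<open>finite K\<close> orth])
  then have "Re (hinner v v) = (norm u)\<^sup>2 - 2 * (\<Sum>i\<in>K. (cmod (c i))\<^sup>2)
      + (\<Sum>i\<in>K. (cmod (c i))\<^sup>2 * (norm (f i))\<^sup>2)"
    by (simp add: hinner_self)
  moreover have "Re (hinner v v) \<ge> 0"
    by (simp add: hinner_self)
  moreover have "(\<Sum>i\<in>K. (cmod (c i))\<^sup>2 * (norm (f i))\<^sup>2) \<le> (\<Sum>i\<in>K. (cmod (c i))\<^sup>2)"
    using norm_le by (intro sum_mono) (simp add: mult_left_le power_le_one)
  ultimately show ?thesis
    unfolding c_def by linarith
qed

section \<open>The trace norm\<close>

definition spectral_op :: "('n \<Rightarrow> complex^'n) \<Rightarrow> ('n \<Rightarrow> real) \<Rightarrow> complex^'n^'n" where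
  "spectral_op e s = (\<chi> r c. \<Sum>i\<in>UNIV. complex_of_real (s i) * e i $ r * cnj (e i $ c))"

lemma spectral_op_apply:
  "spectral_op e s *v x = (\<Sum>i\<in>UNIV. (complex_of_real (s i) * hinner (e i) x) *s e i)"
proof -
  have "(spectral_op e s *v x) $ r = (\<Sum>i\<in>UNIV. (complex_of_real (s i) * hinner (e i) x) *s e i) $ r" for r
  proof -
    have "(spectral_op e s *v x) $ r
        = (\<Sum>c\<in>UNIV. \<Sum>i\<in>UNIV. complex_of_real (s i) * e i $ r * cnj (e i $ c) * x $ c)"
      by (simp add: spectral_op_def matrix_vector_mult_def sum_distrib_right)
    also have "\<dots> = (\<Sum>i\<in>UNIV. \<Sum>c\<in>UNIV. complex_of_real (s i) * e i $ r * cnj (e i $ c) * x $ c)"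
      by (rule sum.swap)
    also have "\<dots> = (\<Sum>i\<in>UNIV. (complex_of_real (s i) * hinner (e i) x) *s e i) $ r"
      by (simp add: hinner_def sum_component sum_distrib_left mult_ac)
    finally show ?thesis .
  qed
  then show ?thesis by (simp add: vec_eq_iff)
qed

lemma spectral_op_eigen:
  fixes e :: "'n::finite \<Rightarrow> complex^'n"
  assumes "onb e"
  shows "spectral_op e s *v e k = s k *\<^sub>R e k"
proof -
  have "spectral_op e s *v e k = (\<Sum>i\<in>UNIV. if i = k then complex_of_real (s k) *s e k else 0)"
    using assms unfolding spectral_op_apply onb_def by (intro sum.cong refl) auto
  then show ?thesis
    by (simp add: scaleR_eq_vector_scalar_mult)
qed

lemma psd_spectral_op:
  fixes e :: "'n::finite \<Rightarrow> complex^'n"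
  assumes "\<And>i. s i \<ge> 0"
  shows "psd (spectral_op e s)"
proof -
  have "hinner x (spectral_op e s *v x) = complex_of_real (\<Sum>i\<in>UNIV. s i * (cmod (hinner (e i) x))\<^sup>2)" for x
  proof -
    have "hinner x (spectral_op e s *v x)
        = (\<Sum>i\<in>UNIV. complex_of_real (s i) * (hinner (e i) x * hinner x (e i)))"
      unfolding spectral_op_apply by (simp add: hinner_sum_right hinner_scale_right mult_ac)
    also have "\<dots> = (\<Sum>i\<in>UNIV. complex_of_real (s i * (cmod (hinner (e i) x))\<^sup>2))"
      by (intro sum.cong refl) (metis cnj_hinner mult_cnj_self of_real_mult of_real_power)
    finally show ?thesis by simp
  qed
  then show ?thesis
    using assms unfolding psd_def hinner_def[symmetric] by (simp add: sum_nonneg)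
qed

lemma trace_spectral_op:
  fixes e :: "'n::finite \<Rightarrow> complex^'n"
  assumes "onb e"
  shows "trace (spectral_op e s) = complex_of_real (\<Sum>i\<in>UNIV. s i)"
proof -
  have "trace (spectral_op e s) = (\<Sum>r\<in>UNIV. \<Sum>i\<in>UNIV. complex_of_real (s i) * e i $ r * cnj (e i $ r))"
    unfolding trace_def spectral_op_def by simp
  also have "\<dots> = (\<Sum>i\<in>UNIV. \<Sum>r\<in>UNIV. complex_of_real (s i) * e i $ r * cnj (e i $ r))"
    by (rule sum.swap)
  also have "\<dots> = (\<Sum>i\<in>UNIV. complex_of_real (s i) * hinner (e i) (e i))"
    by (simp add: hinner_def sum_distrib_left mult_ac)
  finally show ?thesis
    using assms unfolding onb_def by simp
qed

lemma psd_square_eigenvector: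
  fixes Q :: "complex^'n^'n"
  assumes "psd Q" and QQ: "Q *v (Q *v v) = (\<sigma>\<^sup>2) *\<^sub>R v" and "\<sigma> \<ge> 0"
  shows "Q *v v = \<sigma> *\<^sub>R v"
proof (cases "\<sigma> = 0")
  case True
  have "hinner (Q *v v) (Q *v v) = hinner v (Q *v (Q *v v))"
    using psd_imp_hermitian[OF \<open>psd Q\<close>] unfolding hermitian_def by simp
  also have "\<dots> = 0"
    using True QQ by simp
  finally show ?thesis
    using True by (simp add: hinner_self)
next
  case False
  define w where "w = Q *v v - \<sigma> *\<^sub>R v"
  have "Q *v w = (- \<sigma>) *\<^sub>R w"
    unfolding w_def using QQ
    by (simp add: matrix_vector_mult_diff_distrib matrix_vector_mult_scaleR power2_eq_square algebra_simps)
  then have "hinner w (Q *v w) = complex_of_real (- \<sigma> * (norm w)\<^sup>2)"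
    by (simp only: hinner_scaleR_right hinner_self of_real_mult)
  then have "Re (hinner w (Q *v w)) = - (\<sigma> * (norm w)\<^sup>2)"
    by simp
  moreover have "Re (hinner w (Q *v w)) \<ge> 0"
    using psdD[OF \<open>psd Q\<close>] by blast
  ultimately have "\<sigma> * (norm w)\<^sup>2 \<le> 0"
    by simp
  then have "w = 0"
    using False \<open>\<sigma> \<ge> 0\<close> by (simp add: mult_le_0_iff)
  then show ?thesis
    unfolding w_def by simp
qed

lemma mat_abs_eq_spectral_op:
  fixes Z :: "complex^'n::finite^'m" and e :: "'n \<Rightarrow> complex^'n"
  assumes e: "onb e" and eig: "\<And>i. (adj Z ** Z) *v e i = (s i)\<^sup>2 *\<^sub>R e i" and "\<And>i. s i \<ge> 0"
  shows "mat_abs Z = spectral_op e s"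
  unfolding mat_abs_def
proof (rule the_equality)
  have "spectral_op e s ** spectral_op e s = adj Z ** Z"
  proof (rule matrix_eq_onb[OF e])
    fix i
    have "(spectral_op e s ** spectral_op e s) *v e i = spectral_op e s *v (spectral_op e s *v e i)"
      by (simp add: matrix_vector_mul_assoc)
    also have "\<dots> = (s i)\<^sup>2 *\<^sub>R e i"
      by (simp add: spectral_op_eigen[OF e] matrix_vector_mult_scaleR power2_eq_square)
    finally show "(spectral_op e s ** spectral_op e s) *v e i = (adj Z ** Z) *v e i"
      by (simp only: eig)
  qed
  then show "psd (spectral_op e s) \<and> spectral_op e s ** spectral_op e s = adj Z ** Z"
    using psd_spectral_op \<open>\<And>i. s i \<ge> 0\<close> by blast
next
  fix Q
  assume Q: "psd Q \<and> Q ** Q = adj Z ** Z"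
  show "Q = spectral_op e s"
  proof (rule matrix_eq_onb[OF e])
    fix i
    have "Q *v (Q *v e i) = (s i)\<^sup>2 *\<^sub>R e i"
      using Q eig by (simp add: matrix_vector_mul_assoc)
    then have "Q *v e i = s i *\<^sub>R e i"
      using Q \<open>\<And>i. s i \<ge> 0\<close> psd_square_eigenvector by blast
    then show "Q *v e i = spectral_op e s *v e i"
      by (simp add: spectral_op_eigen[OF e])
  qed
qed

lemma trace_norm_singular_basis:
  fixes Z :: "complex^'n::finite^'m::finite"
  obtains e where "onb e" "trace_norm Z = (\<Sum>i\<in>UNIV. norm (Z *v e i))"
    "\<forall>i j. i \<noteq> j \<longrightarrow> hinner (Z *v e i) (Z *v e j) = 0"
proof -
  obtain e lam where e: "onb e" and eig: "\<And>i. (adj Z ** Z) *v e i = lam i *\<^sub>R e i"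
    using hermitian_eigenbasis[OF hermitian_adj_mult_self[of Z]] by blast
  have Gram: "hinner x ((adj Z ** Z) *v y) = hinner (Z *v x) (Z *v y)" for x y
    by (metis hinner_adj_right matrix_vector_mul_assoc)
  have ee: "hinner (e i) (e j) = (if i = j then 1 else 0)" for i j
    using e unfolding onb_def by blast
  have "complex_of_real (lam i) = complex_of_real ((norm (Z *v e i))\<^sup>2)" for i
    using Gram[of "e i" "e i"] eig[of i] ee[of i i] by (simp add: hinner_scaleR_right hinner_self)
  then have "(adj Z ** Z) *v e i = (norm (Z *v e i))\<^sup>2 *\<^sub>R e i" for i
    using eig of_real_eq_iff by metis
  then have "mat_abs Z = spectral_op e (\<lambda>i. norm (Z *v e i))"
    by (intro mat_abs_eq_spectral_op[OF e]) auto
  then have "trace_norm Z = (\<Sum>i\<in>UNIV. norm (Z *v e i))"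
    unfolding trace_norm_def by (simp add: trace_spectral_op[OF e])
  moreover have "hinner (Z *v e i) (Z *v e j) = 0" if "i \<noteq> j" for i j
    using that eig ee by (simp add: Gram[symmetric] hinner_scaleR_right)
  ultimately show ?thesis
    using that e by blast
qed

lemma trace_norm_nonneg: "trace_norm (Z::complex^'n::finite^'m::finite) \<ge> 0"
proof -
  obtain e where "onb e" "trace_norm Z = (\<Sum>i\<in>UNIV. norm (Z *v e i))"
    "\<forall>i j. i \<noteq> j \<longrightarrow> hinner (Z *v e i) (Z *v e j) = 0"
    by (rule trace_norm_singular_basis[of Z])
  then show ?thesis
    by (simp add: sum_nonneg)
qed

definition suborthonormal :: "('i \<Rightarrow> complex^'m) \<Rightarrow> bool" where
  "suborthonormal f \<longleftrightarrow> (\<forall>i j. i \<noteq> j \<longrightarrow> hinner (f i) (f j) = 0) \<and> (\<forall>i. norm (f i) \<le> 1)"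

definition pairing :: "('n \<Rightarrow> complex^'n) \<Rightarrow> ('n \<Rightarrow> complex^'m) \<Rightarrow> complex^'n^'m \<Rightarrow> real" where
  "pairing e f Z = Re (\<Sum>i\<in>UNIV. hinner (f i) (Z *v e i))"

lemma onb_imp_suborthonormal: "onb e \<Longrightarrow> suborthonormal e"
  unfolding suborthonormal_def by (simp add: onb_norm) (simp add: onb_def)

lemma suborthonormal_uminus: "suborthonormal f \<Longrightarrow> suborthonormal (\<lambda>i. - f i)"
  unfolding suborthonormal_def by (simp add: hinner_minus_left hinner_def sum_negf)

lemma L2_set_le_of_sum_squares_le:
  "(\<Sum>i\<in>A. (g i)\<^sup>2) \<le> b\<^sup>2 \<Longrightarrow> b \<ge> 0 \<Longrightarrow> L2_set g A \<le> b"
  unfolding L2_set_def by (metis real_sqrt_abs real_sqrt_le_mono abs_of_nonneg)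

lemma L2_set_hinner_le:
  fixes f :: "'n::finite \<Rightarrow> complex^'m"
  assumes "suborthonormal f"
  shows "L2_set (\<lambda>i. cmod (hinner (f i) u)) UNIV \<le> norm u"
  using assms unfolding suborthonormal_def
  by (intro L2_set_le_of_sum_squares_le Bessel_inequality) auto

lemma cmod_sum_hinner_le:
  fixes e f :: "'n::finite \<Rightarrow> complex^_"
  assumes "suborthonormal e" "suborthonormal f"
  shows "cmod (\<Sum>i\<in>UNIV. hinner v (e i) * hinner (f i) u) \<le> norm u * norm v"
proof -
  have "cmod (\<Sum>i\<in>UNIV. hinner v (e i) * hinner (f i) u)
      \<le> (\<Sum>i\<in>UNIV. \<bar>cmod (hinner (e i) v)\<bar> * \<bar>cmod (hinner (f i) u)\<bar>)"
    using norm_sum[of "\<lambda>i. hinner v (e i) * hinner (f i) u" UNIV]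
    by (simp add: norm_mult flip: cnj_hinner[of "e _"])
  also have "\<dots> \<le> L2_set (\<lambda>i. cmod (hinner (e i) v)) UNIV * L2_set (\<lambda>i. cmod (hinner (f i) u)) UNIV"
    by (rule L2_set_mult_ineq)
  also have "\<dots> \<le> norm v * norm u"
    using assms by (intro mult_mono L2_set_hinner_le) (auto simp: L2_set_nonneg)
  finally show ?thesis
    by (simp add: mult.commute)
qed

lemma pairing_le_rank_one_sum:
  fixes Z :: "complex^'n::finite^'m::finite"
  assumes "onb e" "suborthonormal f" "finite K"
    and Z: "\<And>x. Z *v x = (\<Sum>k\<in>K. hinner (v k) x *s u k)"
  shows "pairing e f Z \<le> (\<Sum>k\<in>K. norm (u k) * norm (v k))"
proof -
  have "(\<Sum>i\<in>UNIV. hinner (f i) (Z *v e i))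
      = (\<Sum>i\<in>UNIV. \<Sum>k\<in>K. hinner (v k) (e i) * hinner (f i) (u k))"
    by (simp add: Z hinner_sum_right hinner_scale_right)
  also have "\<dots> = (\<Sum>k\<in>K. \<Sum>i\<in>UNIV. hinner (v k) (e i) * hinner (f i) (u k))"
    by (rule sum.swap)
  finally have "pairing e f Z \<le> cmod (\<Sum>k\<in>K. \<Sum>i\<in>UNIV. hinner (v k) (e i) * hinner (f i) (u k))"
    unfolding pairing_def by (simp only: complex_Re_le_cmod)
  also have "\<dots> \<le> (\<Sum>k\<in>K. cmod (\<Sum>i\<in>UNIV. hinner (v k) (e i) * hinner (f i) (u k)))"
    by (rule norm_sum)
  also have "\<dots> \<le> (\<Sum>k\<in>K. norm (u k) * norm (v k))"
    using assms onb_imp_suborthonormal by (intro sum_mono cmod_sum_hinner_le)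
  finally show ?thesis .
qed

lemma trace_norm_attained:
  fixes Z :: "complex^'n::finite^'m::finite"
  obtains e f where "onb e" "suborthonormal f" "trace_norm Z = pairing e f Z"
proof -
  obtain e where e: "onb e" and tn: "trace_norm Z = (\<Sum>i\<in>UNIV. norm (Z *v e i))"
    and orth: "\<forall>i j. i \<noteq> j \<longrightarrow> hinner (Z *v e i) (Z *v e j) = 0"
    by (rule trace_norm_singular_basis[of Z])
  define f where "f i = (1 / norm (Z *v e i)) *\<^sub>R (Z *v e i)" for i
  have "suborthonormal f"
    using orth unfolding suborthonormal_def f_def by (simp add: hinner_scaleR_left hinner_scaleR_right)
  moreover have "hinner (f i) (Z *v e i) = complex_of_real (norm (Z *v e i))" for i
    by (cases "Z *v e i = 0") (simp_all add: f_def hinner_scaleR_left hinner_self power2_eq_square)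
  then have "trace_norm Z = pairing e f Z"
    unfolding pairing_def by (simp add: tn)
  ultimately show ?thesis
    using that e by blast
qed

lemma trace_norm_le_rank_one_sum:
  fixes Z :: "complex^'n::finite^'m::finite"
  assumes "finite K" "\<And>x. Z *v x = (\<Sum>k\<in>K. hinner (v k) x *s u k)"
  shows "trace_norm Z \<le> (\<Sum>k\<in>K. norm (u k) * norm (v k))"
proof -
  obtain e f where ef: "onb e" "suborthonormal f" and tn: "trace_norm Z = pairing e f Z"
    by (rule trace_norm_attained[of Z])
  show ?thesis
    using pairing_le_rank_one_sum[OF ef assms] tn by simp
qed

lemma pairing_le_trace_norm:
  fixes Z :: "complex^'n::finite^'m::finite"
  assumes "onb e" "suborthonormal f"
  shows "pairing e f Z \<le> trace_norm Z"
proof -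
  obtain g where g: "onb g" and tn: "trace_norm Z = (\<Sum>j\<in>UNIV. norm (Z *v g j))"
    and "\<forall>i j. i \<noteq> j \<longrightarrow> hinner (Z *v g i) (Z *v g j) = 0"
    by (rule trace_norm_singular_basis[of Z])
  have "pairing e f Z \<le> (\<Sum>j\<in>UNIV. norm (Z *v g j) * norm (g j))"
    using assms finite matrix_vector_mult_onb_expansion[OF g] by (rule pairing_le_rank_one_sum)
  also have "\<dots> = trace_norm Z"
    using g tn by (simp add: onb_norm)
  finally show ?thesis .
qed

lemma bounded_linear_pairing: "bounded_linear (pairing e f :: complex^'n::finite^'m::finite \<Rightarrow> real)"
proof -
  have "linear (pairing e f :: complex^'n^'m \<Rightarrow> real)"
  proof (rule linearI)
    fix A B :: "complex^'n^'m"
    show "pairing e f (A + B) = pairing e f A + pairing e f B"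
      unfolding pairing_def by (simp add: matrix_vector_mult_add_rdistrib hinner_add_right sum.distrib)
  next
    fix c :: real and A :: "complex^'n^'m"
    show "pairing e f (c *\<^sub>R A) = c *\<^sub>R pairing e f A"
      unfolding pairing_def
      by (simp add: scaleR_matrix_vector_mult hinner_scaleR_right sum_distrib_left[symmetric])
  qed
  then show ?thesis
    using linear_conv_bounded_linear by blast
qed

lemma pairing_diff: "pairing e f (A - B) = pairing e f A - pairing e f B"
  unfolding pairing_def by (simp add: matrix_vector_mult_diff_rdistrib hinner_diff_right sum_subtractf)

lemma pairing_uminus_left: "pairing e (\<lambda>i. - f i) Z = - pairing e f Z"
  unfolding pairing_def by (simp add: hinner_minus_left sum_negf)

lemma pairing_zero [simp]: "pairing e f 0 = 0"
  unfolding pairing_def by simp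

lemma trace_norm_diff_le:
  fixes A B :: "complex^'n::finite^'m::finite"
  shows "trace_norm (A - B) \<le> trace_norm A + trace_norm B"
proof -
  obtain e f where ef: "onb e" "suborthonormal f" and tn: "trace_norm (A - B) = pairing e f (A - B)"
    by (rule trace_norm_attained[of "A - B"])
  have "pairing e f (A - B) = pairing e f A + pairing e (\<lambda>i. - f i) B"
    by (simp add: pairing_diff pairing_uminus_left)
  also have "\<dots> \<le> trace_norm A + trace_norm B"
    using ef suborthonormal_uminus by (intro add_mono pairing_le_trace_norm)
  finally show ?thesis
    using tn by simp
qed

lemma trace_norm_integral_le:
  fixes F :: "'x \<Rightarrow> complex^'n::finite^'m::finite"
  assumes "integrable M B" "\<And>x. x \<in> space M \<Longrightarrow> trace_norm (F x) \<le> B x"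
  shows "trace_norm (\<integral>x. F x \<partial>M) \<le> (\<integral>x. B x \<partial>M)"
proof -
  obtain e f where ef: "onb e" "suborthonormal f"
    and tn: "trace_norm (\<integral>x. F x \<partial>M) = pairing e f (\<integral>x. F x \<partial>M)"
    by (rule trace_norm_attained[of "\<integral>x. F x \<partial>M"])
  have B_nonneg: "x \<in> space M \<Longrightarrow> 0 \<le> B x" for x
    using assms(2) trace_norm_nonneg order_trans by blast
  show ?thesis
  proof (cases "integrable M F")
    case True
    have "pairing e f (\<integral>x. F x \<partial>M) = (\<integral>x. pairing e f (F x) \<partial>M)"
      by (rule integral_bounded_linear[OF bounded_linear_pairing True, symmetric])
    also have "\<dots> \<le> (\<integral>x. B x \<partial>M)"
      using ef assms B_nonneg
      by (intro integral_mono') (auto intro: order_trans[OF pairing_le_trace_norm])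
    finally show ?thesis
      using tn by simp
  next
    case False
    then show ?thesis
      using tn B_nonneg by (simp add: not_integrable_integral_eq integral_nonneg)
  qed
qed

section \<open>Second moments of the Haar measure\<close>

lemma is_haarD:
  assumes "is_haar \<mu>"
  shows "prob_space \<mu>" "sets \<mu> = sets borel" "AE U in \<mu>. unitary U"
    "\<And>V. unitary V \<Longrightarrow> distr \<mu> borel (\<lambda>U. V ** U) = \<mu>"
proof -
  show P: "prob_space \<mu>" and "sets \<mu> = sets borel"
    and "\<And>V. unitary V \<Longrightarrow> distr \<mu> borel (\<lambda>U. V ** U) = \<mu>"
    using assms unfolding is_haar_def by blast+
  have "measure \<mu> {U. unitary U} = 1"
    using assms unfolding is_haar_def by (simp add: measure_def)
  then have "AE U in \<mu>. U \<in> {U. unitary U}"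
    using prob_space.AE_prob_1[OF P] by blast
  then show "AE U in \<mu>. unitary U"
    by simp
qed

lemma haar_borel_measurable_continuous:
  assumes "is_haar \<mu>" "continuous_on UNIV f"
  shows "f \<in> borel_measurable \<mu>"
  using borel_measurable_continuous_onI[OF assms(2)] measurable_cong_sets[OF is_haarD(2)[OF assms(1)] refl]
  by blast

lemma haar_integrable_bounded_continuous:
  fixes f :: "complex^'a::finite^'a \<Rightarrow> 'b::{banach, second_countable_topology}"
  assumes "is_haar \<mu>" "continuous_on UNIV f" "\<And>U. unitary U \<Longrightarrow> norm (f U) \<le> B"
  shows "integrable \<mu> f"
proof -
  have "AE U in \<mu>. norm (f U) \<le> B"
    using is_haarD(3)[OF assms(1)] assms(3) by (auto elim: AE_mp)
  then show ?thesis
    using prob_space.finite_measure[OF is_haarD(1)[OF assms(1)]]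
      haar_borel_measurable_continuous[OF assms(1,2)]
    by (intro finite_measure.integrable_const_bound) auto
qed

lemma integral_haar_left_invariant:
  fixes f :: "complex^'a::finite^'a \<Rightarrow> 'b::{banach, second_countable_topology}"
  assumes h: "is_haar \<mu>" and "unitary V" and f: "continuous_on UNIV f"
  shows "(\<integral>U. f (V ** U) \<partial>\<mu>) = (\<integral>U. f U \<partial>\<mu>)"
proof -
  have "(\<lambda>U. V ** U) \<in> \<mu> \<rightarrow>\<^sub>M borel"
    by (rule haar_borel_measurable_continuous[OF h])
      (unfold matrix_matrix_mult_def, intro continuous_intros)
  then have "(\<integral>U. f (V ** U) \<partial>\<mu>) = (\<integral>U. f U \<partial>distr \<mu> borel (\<lambda>U. V ** U))"
    using borel_measurable_continuous_onI[OF f] by (simp add: integral_distr)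
  then show ?thesis
    using is_haarD(4)[OF h \<open>unitary V\<close>] by simp
qed

lemma unitary_entry_le_1:
  assumes "unitary U"
  shows "cmod (U $ a $ b) \<le> 1"
proof -
  have "(adj U ** U) $ b $ b = 1"
    using assms unfolding unitary_def by (simp add: mat_def)
  then have "(\<Sum>c\<in>UNIV. complex_of_real ((cmod (U $ c $ b))\<^sup>2)) = 1"
    by (simp add: matrix_matrix_mult_def cnj_mult_self)
  then have "(\<Sum>c\<in>UNIV. (cmod (U $ c $ b))\<^sup>2) = 1"
    by (metis of_real_eq_1_iff of_real_sum)
  moreover have "(cmod (U $ a $ b))\<^sup>2 \<le> (\<Sum>c\<in>UNIV. (cmod (U $ c $ b))\<^sup>2)"
    by (rule member_le_sum) auto
  ultimately show ?thesis
    by (simp add: power_le_one_iff abs_square_le_1)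
qed

lemma unitary_if_selfadjoint_involution: "adj V = V \<Longrightarrow> V ** V = mat 1 \<Longrightarrow> unitary V"
  unfolding unitary_def by simp

lemma sum_delta_mult:
  fixes f :: "'a::finite \<Rightarrow> 'b::semiring_0"
  shows "(\<Sum>c\<in>UNIV. (if a = c then s else 0) * f c) = s * f a"
proof -
  have "(\<Sum>c\<in>UNIV. (if a = c then s else 0) * f c) = (\<Sum>c\<in>UNIV. if a = c then s * f a else 0)"
    by (intro sum.cong) auto
  then show ?thesis by simp
qed

definition sign_flip :: "'a::finite \<Rightarrow> complex^'a^'a" where
  "sign_flip k = (\<chi> i j. if i = j then (if i = k then -1 else 1) else 0)"

lemma sign_flip_mult_nth: "(sign_flip k ** U) $ a $ b = (if a = k then -1 else 1) * U $ a $ b"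
  unfolding matrix_matrix_mult_def sign_flip_def by (simp add: sum_delta_mult)

lemma unitary_sign_flip: "unitary (sign_flip k)"
proof (rule unitary_if_selfadjoint_involution)
  show "adj (sign_flip k) = sign_flip k"
    by (simp add: adj_def sign_flip_def vec_eq_iff)
  show "sign_flip k ** sign_flip k = mat 1"
    by (simp add: vec_eq_iff sign_flip_mult_nth mat_def) (simp add: sign_flip_def)
qed

definition swap_rows :: "'a::finite \<Rightarrow> 'a \<Rightarrow> complex^'a^'a" where
  "swap_rows k l = (\<chi> i j. if Transposition.transpose k l i = j then 1 else 0)"

lemma swap_rows_mult_nth: "(swap_rows k l ** U) $ a $ b = U $ (Transposition.transpose k l a) $ b"
  unfolding matrix_matrix_mult_def swap_rows_def by (simp add: sum_delta_mult)

lemma unitary_swap_rows: "unitary (swap_rows k l)"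
proof (rule unitary_if_selfadjoint_involution)
  show "adj (swap_rows k l) = swap_rows k l"
    unfolding adj_def swap_rows_def vec_eq_iff by (auto simp: transpose_def)
  show "swap_rows k l ** swap_rows k l = mat 1"
    by (simp add: vec_eq_iff swap_rows_mult_nth mat_def) (auto simp: swap_rows_def)
qed

definition haar_moment :: "(complex^'a^'a) measure \<Rightarrow> 'a \<Rightarrow> 'a \<Rightarrow> 'a \<Rightarrow> 'a \<Rightarrow> complex" where
  "haar_moment \<mu> a b a' b' = (\<integral>U. U $ a $ b * cnj (U $ a' $ b') \<partial>\<mu>)"

lemma continuous_on_entry_product: "continuous_on UNIV (\<lambda>U::complex^'a::finite^'a. U $ a $ b * cnj (U $ a' $ b'))"
  by (intro continuous_intros)

lemma haar_integrable_entry_product: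
  assumes "is_haar \<mu>"
  shows "integrable \<mu> (\<lambda>U::complex^'a::finite^'a. U $ a $ b * cnj (U $ a' $ b'))"
proof (rule haar_integrable_bounded_continuous[OF assms continuous_on_entry_product])
  fix U :: "complex^'a^'a"
  assume "unitary U"
  then show "norm (U $ a $ b * cnj (U $ a' $ b')) \<le> 1"
    by (simp add: norm_mult mult_le_one unitary_entry_le_1)
qed

lemma haar_moment_eq_0:
  fixes \<mu> :: "(complex^'a::finite^'a) measure"
  assumes h: "is_haar \<mu>" and "a \<noteq> a'"
  shows "haar_moment \<mu> a b a' b' = 0"
proof -
  have "haar_moment \<mu> a b a' b' = (\<integral>U. (sign_flip a ** U) $ a $ b * cnj ((sign_flip a ** U) $ a' $ b') \<partial>\<mu>)"
    unfolding haar_moment_def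
    by (rule integral_haar_left_invariant[OF h unitary_sign_flip continuous_on_entry_product, symmetric])
  also have "\<dots> = - haar_moment \<mu> a b a' b'"
    using \<open>a \<noteq> a'\<close> by (simp add: sign_flip_mult_nth haar_moment_def)
  finally show ?thesis by simp
qed

lemma haar_moment_swap_rows:
  fixes \<mu> :: "(complex^'a::finite^'a) measure"
  assumes h: "is_haar \<mu>"
  shows "haar_moment \<mu> (Transposition.transpose k l a) b (Transposition.transpose k l a') b'
    = haar_moment \<mu> a b a' b'"
  using integral_haar_left_invariant[OF h unitary_swap_rows continuous_on_entry_product]
  unfolding haar_moment_def by (simp add: swap_rows_mult_nth)

lemma haar_moment_trace:
  fixes \<mu> :: "(complex^'a::finite^'a) measure"
  assumes h: "is_haar \<mu>"
  shows "(\<Sum>a\<in>UNIV. haar_moment \<mu> a b a b') = (if b' = b then 1 else 0)"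
proof -
  have "(\<Sum>a\<in>UNIV. haar_moment \<mu> a b a b') = (\<integral>U. (\<Sum>a\<in>UNIV. U $ a $ b * cnj (U $ a $ b')) \<partial>\<mu>)"
    unfolding haar_moment_def using haar_integrable_entry_product[OF h] by simp
  also have "\<dots> = (\<integral>U. (if b' = b then 1 else 0) \<partial>\<mu>)"
  proof (rule integral_cong_AE)
    show "(\<lambda>U. \<Sum>a\<in>UNIV. U $ a $ b * cnj (U $ a $ b')) \<in> borel_measurable \<mu>"
      by (rule haar_borel_measurable_continuous[OF h]) (intro continuous_intros)
    have "(\<Sum>a\<in>UNIV. U $ a $ b * cnj (U $ a $ b')) = (if b' = b then 1 else 0)" if "unitary U" for U
    proof -
      have "(adj U ** U) $ b' $ b = (if b' = b then 1 else 0)"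
        using that unfolding unitary_def by (simp add: mat_def)
      then show ?thesis
        by (simp add: matrix_matrix_mult_def mult.commute)
    qed
    then show "AE U in \<mu>. (\<Sum>a\<in>UNIV. U $ a $ b * cnj (U $ a $ b')) = (if b' = b then 1 else 0)"
      using is_haarD(3)[OF h] by (auto elim: AE_mp)
  qed simp
  also have "\<dots> = (if b' = b then 1 else 0)"
    using prob_space.prob_space[OF is_haarD(1)[OF h]] by simp
  finally show ?thesis .
qed

text \<open>Invariance under sign flips kills the off-diagonal moments; invariance under row
  transpositions makes the diagonal ones equal, and unitarity fixes their sum.\<close>

theorem haar_moment_eq:
  fixes \<mu> :: "(complex^'a::finite^'a) measure"
  assumes h: "is_haar \<mu>"
  shows "haar_moment \<mu> a b a' b' = (if a = a' \<and> b = b' then 1 / of_nat CARD('a) else 0)"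
proof (cases "a = a'")
  case False
  then show ?thesis
    using haar_moment_eq_0[OF h] by simp
next
  case True
  have "haar_moment \<mu> c b c b' = haar_moment \<mu> a b a b'" for c
    using haar_moment_swap_rows[OF h, of a c a b a b'] by (simp add: transpose_def)
  then have "(\<Sum>c\<in>UNIV. haar_moment \<mu> c b c b') = (\<Sum>c\<in>(UNIV::'a set). haar_moment \<mu> a b a b')"
    by (rule sum.cong[OF refl])
  then have "of_nat CARD('a) * haar_moment \<mu> a b a b' = (if b' = b then 1 else 0)"
    using haar_moment_trace[OF h, of b b'] by simp
  then show ?thesis
    using True by (auto simp: eq_divide_eq mult.commute)
qed

section \<open>The map \<open>\<Theta>\<close>\<close>

lemma sum_if_in_range:
  fixes g :: "'u::finite \<Rightarrow> 'x::finite"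
  assumes "inj g" "\<And>x. P x \<longleftrightarrow> x \<in> range g"
  shows "(\<Sum>x\<in>UNIV. if P x then f x else 0) = (\<Sum>y\<in>UNIV. (f (g y) :: 'b::comm_monoid_add))"
proof -
  have "(\<Sum>x\<in>UNIV. if P x then f x else 0) = (\<Sum>x\<in>{x\<in>UNIV. P x}. f x)"
    by (rule sum.inter_filter[symmetric]) simp
  also have "{x\<in>UNIV. P x} = range g"
    using assms(2) by blast
  finally show ?thesis
    using sum.reindex[OF assms(1)] by simp
qed

lemma embedA_apply:
  fixes U :: "complex^'a::finite^'a" and w :: "complex^('a \<times> 'c::finite \<times> 'a \<times> 'e::finite)"
  shows "(embedA U *v w) $ (a', c, a, e) = (\<Sum>b\<in>UNIV. U $ a $ b * w $ (a', c, b, e))"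
proof -
  have "(embedA U *v w) $ (a', c, a, e)
      = (\<Sum>j\<in>UNIV. if \<exists>b. j = (a', c, b, e) then U $ a $ fst (snd (snd j)) * w $ j else 0)"
    unfolding matrix_vector_mult_def embedA_def vec_lambda_beta
    by (intro sum.cong refl) (auto split: prod.splits)
  also have "\<dots> = (\<Sum>b\<in>UNIV. U $ a $ b * w $ (a', c, b, e))"
    by (subst sum_if_in_range[where g="\<lambda>b. (a', c, b, e)"]) (auto simp: inj_def)
  finally show ?thesis .
qed

lemma adj_phi_iso_apply:
  fixes z :: "complex^('a::finite \<times> 'c::finite \<times> 'a \<times> 'e::finite)"
  shows "(adj (phi_iso :: complex^('c \<times> 'e)^('a \<times> 'c \<times> 'a \<times> 'e)) *v z) $ (c, e)
     = complex_of_real (1 / sqrt (real CARD('a))) * (\<Sum>a\<in>UNIV. z $ (a, c, a, e))"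
proof -
  have "(adj (phi_iso :: complex^('c \<times> 'e)^('a \<times> 'c \<times> 'a \<times> 'e)) *v z) $ (c, e)
      = (\<Sum>j\<in>UNIV. if \<exists>a. j = (a, c, a, e)
          then complex_of_real (1 / sqrt (real CARD('a))) * z $ j else 0)"
    unfolding matrix_vector_mult_def phi_iso_def adj_def vec_lambda_beta
    by (intro sum.cong refl) (auto split: prod.splits)
  also have "\<dots> = (\<Sum>a\<in>UNIV. complex_of_real (1 / sqrt (real CARD('a))) * z $ (a, c, a, e))"
    by (subst sum_if_in_range[where g="\<lambda>a. (a, c, a, e)"]) (auto simp: inj_def)
  finally show ?thesis
    by (simp add: sum_distrib_left)
qed

definition phi_contract :: "complex^'a::finite^'a \<Rightarrow> complex^('a \<times> 'c::finite \<times> 'a \<times> 'e::finite)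
    \<Rightarrow> complex^('c \<times> 'e)" where
  "phi_contract U w = (\<chi> p. complex_of_real (1 / sqrt (real CARD('a))) *
     (\<Sum>a\<in>UNIV. \<Sum>b\<in>UNIV. U $ a $ b * w $ (a, fst p, b, snd p)))"

lemma adj_phi_iso_embedA_apply:
  fixes U :: "complex^'a::finite^'a" and w :: "complex^('a \<times> 'c::finite \<times> 'a \<times> 'e::finite)"
  shows "adj (phi_iso :: complex^('c \<times> 'e)^('a \<times> 'c \<times> 'a \<times> 'e)) *v (embedA U *v w) = phi_contract U w"
  unfolding vec_eq_iff
proof
  fix p :: "'c \<times> 'e"
  obtain c e where p: "p = (c, e)" by (cases p)
  show "(adj (phi_iso :: complex^('c \<times> 'e)^('a \<times> 'c \<times> 'a \<times> 'e)) *v (embedA U *v w)) $ p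
      = phi_contract U w $ p"
    unfolding p adj_phi_iso_apply embedA_apply phi_contract_def by simp
qed

lemma continuous_on_phi_contract: "continuous_on UNIV (\<lambda>U. phi_contract U w)"
  unfolding phi_contract_def by (intro continuous_intros)

lemma Theta_apply:
  fixes Y :: "complex^('a::finite \<times> 'c::finite \<times> 'a \<times> 'e::finite)^('a \<times> 'c \<times> 'a \<times> 'e)"
  assumes g: "onb g"
  shows "Theta Y U *v x = (\<Sum>j\<in>UNIV. hinner (phi_contract U (g j)) x *s
            ((real CARD('a))\<^sup>2 *\<^sub>R phi_contract U (Y *v g j)))"
proof -
  define E where "E = (embedA U :: complex^('a \<times> 'c \<times> 'a \<times> 'e)^('a \<times> 'c \<times> 'a \<times> 'e))"
  define P where "P = (phi_iso :: complex^('c \<times> 'e)^('a \<times> 'c \<times> 'a \<times> 'e))"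
  have coeff: "hinner (g j) (adj E *v (P *v x)) = hinner (phi_contract U (g j)) x" for j
    by (simp add: hinner_adj_right flip: hinner_adj_left)
      (simp add: P_def E_def adj_phi_iso_embedA_apply)
  have "Theta Y U *v x = (real CARD('a))\<^sup>2 *\<^sub>R (adj P *v (E *v (Y *v (adj E *v (P *v x)))))"
    unfolding Theta_def E_def[symmetric] P_def[symmetric] scaleR_matrix_vector_mult
    by (simp add: matrix_vector_mul_assoc matrix_mul_assoc)
  also have "Y *v (adj E *v (P *v x)) = (\<Sum>j\<in>UNIV. hinner (phi_contract U (g j)) x *s (Y *v g j))"
    by (simp only: matrix_vector_mult_onb_expansion[OF g, of Y "adj E *v (P *v x)"] coeff)
  also have "adj P *v (E *v (\<Sum>j\<in>UNIV. hinner (phi_contract U (g j)) x *s (Y *v g j)))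
      = (\<Sum>j\<in>UNIV. hinner (phi_contract U (g j)) x *s phi_contract U (Y *v g j))"
    by (simp add: vec.sum vector_scalar_commute P_def E_def adj_phi_iso_embedA_apply)
  finally show ?thesis
    by (simp add: scaleR_sum_right vec_eq_iff)
qed

lemma trace_norm_Theta_le:
  fixes Y :: "complex^('a::finite \<times> 'c::finite \<times> 'a \<times> 'e::finite)^('a \<times> 'c \<times> 'a \<times> 'e)"
  assumes "onb g"
  shows "trace_norm (Theta Y U)
    \<le> (real CARD('a))\<^sup>2 * (\<Sum>j\<in>UNIV. norm (phi_contract U (Y *v g j)) * norm (phi_contract U (g j)))"
  using trace_norm_le_rank_one_sum[OF finite Theta_apply[OF assms]]
  by (simp add: sum_distrib_left mult.assoc)

lemma sum_diagonal_delta: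
  fixes f :: "'a::finite \<Rightarrow> 'b::finite \<Rightarrow> 'b \<Rightarrow> complex"
  shows "(\<Sum>a'\<in>UNIV. \<Sum>b\<in>UNIV. \<Sum>b'\<in>UNIV. (if a' = a \<and> b' = b then x else 0) * f a' b b')
       = (\<Sum>b\<in>UNIV. x * f a b b)"
proof -
  have "(\<Sum>b'\<in>UNIV. (if a' = a \<and> b' = b then x else 0) * f a' b b')
      = (if a' = a then x * f a' b b else 0)" for a' b
  proof -
    have "(\<Sum>b'\<in>UNIV. (if a' = a \<and> b' = b then x else 0) * f a' b b')
        = (\<Sum>b'\<in>UNIV. if b' = b then (if a' = a then x * f a' b b else 0) else 0)"
      by (intro sum.cong refl) auto
    then show ?thesis by simp
  qed
  then have "(\<Sum>a'\<in>UNIV. \<Sum>b\<in>UNIV. \<Sum>b'\<in>UNIV. (if a' = a \<and> b' = b then x else 0) * f a' b b')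
      = (\<Sum>a'\<in>UNIV. \<Sum>b\<in>UNIV. if a' = a then x * f a' b b else 0)"
    by simp
  also have "\<dots> = (\<Sum>b\<in>UNIV. \<Sum>a'\<in>UNIV. if a' = a then x * f a' b b else 0)"
    by (rule sum.swap)
  finally show ?thesis by simp
qed

lemma sum_UNIV_prod:
  "(\<Sum>x\<in>(UNIV::('u::finite \<times> 'v::finite) set). f x) = (\<Sum>u\<in>UNIV. \<Sum>v\<in>UNIV. f (u, v))"
  by (simp add: sum.cartesian_product)

lemma norm_phi_contract_sq:
  fixes U :: "complex^'a::finite^'a" and w :: "complex^('a \<times> 'c::finite \<times> 'a \<times> 'e::finite)"
  shows "complex_of_real ((norm (phi_contract U w))\<^sup>2) = (1 / of_nat CARD('a)) *
    (\<Sum>c\<in>UNIV. \<Sum>e\<in>UNIV. \<Sum>a\<in>UNIV. \<Sum>a'\<in>UNIV. \<Sum>b\<in>UNIV. \<Sum>b'\<in>UNIV.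
      (U $ a' $ b' * cnj (U $ a $ b)) * (w $ (a', c, b', e) * cnj (w $ (a, c, b, e))))"
proof -
  define k where "k = complex_of_real (1 / sqrt (real CARD('a)))"
  have "cnj k * k = complex_of_real ((1 / sqrt (real CARD('a)))\<^sup>2)"
    unfolding k_def by (simp only: complex_cnj_complex_of_real of_real_mult power2_eq_square)
  then have kk: "cnj k * k = 1 / of_nat CARD('a)"
    by (simp add: power_divide)
  have "complex_of_real ((norm (phi_contract U w))\<^sup>2) = (\<Sum>c\<in>UNIV. \<Sum>e\<in>UNIV. (cnj k * k) *
      (cnj (\<Sum>a\<in>UNIV. \<Sum>b\<in>UNIV. U $ a $ b * w $ (a, c, b, e))
        * (\<Sum>a\<in>UNIV. \<Sum>b\<in>UNIV. U $ a $ b * w $ (a, c, b, e))))"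
    unfolding hinner_self[symmetric] hinner_def phi_contract_def k_def[symmetric]
    by (simp add: sum_UNIV_prod mult_ac)
  then show ?thesis
    unfolding kk by (simp add: sum_distrib_left sum_distrib_right cnj_sum mult_ac)
qed

lemma norm_sq_vec4:
  fixes w :: "complex^('a::finite \<times> 'c::finite \<times> 'b::finite \<times> 'e::finite)"
  shows "complex_of_real ((norm w)\<^sup>2)
    = (\<Sum>c\<in>UNIV. \<Sum>e\<in>UNIV. \<Sum>a\<in>UNIV. \<Sum>b\<in>UNIV. w $ (a, c, b, e) * cnj (w $ (a, c, b, e)))"
proof -
  have "complex_of_real ((norm w)\<^sup>2)
      = (\<Sum>a\<in>UNIV. \<Sum>c\<in>UNIV. \<Sum>b\<in>UNIV. \<Sum>e\<in>UNIV. w $ (a, c, b, e) * cnj (w $ (a, c, b, e)))"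
    unfolding hinner_self[symmetric] hinner_def by (simp add: sum_UNIV_prod mult.commute)
  also have "\<dots> = (\<Sum>c\<in>UNIV. \<Sum>a\<in>UNIV. \<Sum>b\<in>UNIV. \<Sum>e\<in>UNIV. w $ (a, c, b, e) * cnj (w $ (a, c, b, e)))"
    by (rule sum.swap)
  also have "\<dots> = (\<Sum>c\<in>UNIV. \<Sum>a\<in>UNIV. \<Sum>e\<in>UNIV. \<Sum>b\<in>UNIV. w $ (a, c, b, e) * cnj (w $ (a, c, b, e)))"
    by (intro sum.cong refl sum.swap)
  also have "\<dots> = (\<Sum>c\<in>UNIV. \<Sum>e\<in>UNIV. \<Sum>a\<in>UNIV. \<Sum>b\<in>UNIV. w $ (a, c, b, e) * cnj (w $ (a, c, b, e)))"
    by (intro sum.cong refl sum.swap)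
  finally show ?thesis .
qed

lemma haar_second_moment_phi_contract:
  fixes \<mu> :: "(complex^'a::finite^'a) measure" and w :: "complex^('a \<times> 'c::finite \<times> 'a \<times> 'e::finite)"
  assumes h: "is_haar \<mu>"
  shows "integrable \<mu> (\<lambda>U. (norm (phi_contract U w))\<^sup>2)"
    "(\<integral>U. (norm (phi_contract U w))\<^sup>2 \<partial>\<mu>) = (norm w / real CARD('a))\<^sup>2"
proof -
  define D :: complex where "D = of_nat CARD('a)"
  define T where "T a b a' b' c e = w $ (a', c, b', e) * cnj (w $ (a, c, b, e))" for a b a' b' c e
  define G where "G U = (1 / D) * (\<Sum>c\<in>UNIV. \<Sum>e\<in>UNIV. \<Sum>a\<in>UNIV. \<Sum>a'\<in>UNIV. \<Sum>b\<in>UNIV. \<Sum>b'\<in>UNIV.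
      (U $ a' $ b' * cnj (U $ a $ b)) * T a b a' b' c e)" for U :: "complex^'a^'a"
  have "complex_of_real ((norm (phi_contract U w))\<^sup>2) = G U" for U
    unfolding G_def T_def D_def by (rule norm_phi_contract_sq)
  then have norm_eq: "(\<lambda>U. (norm (phi_contract U w))\<^sup>2) = (\<lambda>U. Re (G U))"
    by (metis Re_complex_of_real)
  have G_integrable: "integrable \<mu> G"
    unfolding G_def using haar_integrable_entry_product[OF h] by simp
  have "(\<integral>U. G U \<partial>\<mu>) = (1 / D) * (\<Sum>c\<in>UNIV. \<Sum>e\<in>UNIV. \<Sum>a\<in>UNIV. \<Sum>a'\<in>UNIV. \<Sum>b\<in>UNIV. \<Sum>b'\<in>UNIV.
      haar_moment \<mu> a' b' a b * T a b a' b' c e)"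
    unfolding G_def haar_moment_def using haar_integrable_entry_product[OF h] by simp
  also have "\<dots> = (1 / D) * (1 / D) * (\<Sum>c\<in>UNIV. \<Sum>e\<in>UNIV. \<Sum>a\<in>UNIV. \<Sum>b\<in>UNIV. T a b a b c e)"
    unfolding haar_moment_eq[OF h] D_def by (simp add: sum_diagonal_delta sum_distrib_left mult.assoc)
  also have "\<dots> = complex_of_real ((norm w / real CARD('a))\<^sup>2)"
    unfolding T_def norm_sq_vec4[symmetric] D_def by (simp add: power_divide power2_eq_square)
  finally have "(\<integral>U. G U \<partial>\<mu>) = complex_of_real ((norm w / real CARD('a))\<^sup>2)" .
  then show "(\<integral>U. (norm (phi_contract U w))\<^sup>2 \<partial>\<mu>) = (norm w / real CARD('a))\<^sup>2"
    unfolding norm_eq integral_Re[OF G_integrable] by simp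
  show "integrable \<mu> (\<lambda>U. (norm (phi_contract U w))\<^sup>2)"
    unfolding norm_eq using integrable_Re[OF G_integrable] .
qed

lemma mult_le_weighted_squares:
  fixes x y t :: real
  assumes "t > 0"
  shows "x * y \<le> (x\<^sup>2 / t + t * y\<^sup>2) / 2"
proof -
  have "0 \<le> (x - t * y)\<^sup>2" by simp
  then have "2 * t * (x * y) \<le> x\<^sup>2 + t\<^sup>2 * y\<^sup>2"
    by (simp add: power2_eq_square algebra_simps)
  then have "x * y \<le> (x\<^sup>2 + t\<^sup>2 * y\<^sup>2) / (2 * t)"
    using assms by (simp add: pos_le_divide_eq mult.commute)
  also have "\<dots> = (x\<^sup>2 / t + t * y\<^sup>2) / 2"
    using assms by (simp add: add_divide_distrib power2_eq_square)
  finally show ?thesis .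
qed

lemma le_sqrt_mult_if_le_weighted_means:
  fixes a b c :: real
  assumes "a \<ge> 0" "b \<ge> 0" and le: "\<And>t. t > 0 \<Longrightarrow> c \<le> (a / t + t * b) / 2"
  shows "c \<le> sqrt a * sqrt b"
proof (cases "a = 0 \<or> b = 0")
  case True
  then have "c \<le> 0"
  proof
    assume "a = 0"
    then show ?thesis
      using le by (intro nonpos_if_le_mult_all_pos[where k="b / 2"]) simp
  next
    assume "b = 0"
    have "c \<le> s * (a / 2)" if "s > 0" for s
      using le[of "1 / s"] that \<open>b = 0\<close> by (simp add: mult.commute)
    then show ?thesis
      by (rule nonpos_if_le_mult_all_pos)
  qed
  then show ?thesis
    using True by auto
next
  case False
  then have "a > 0" "b > 0"
    using assms(1,2) by auto
  have "(a / (sqrt a / sqrt b) + sqrt a / sqrt b * b) / 2 = sqrt a * sqrt b"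
    using \<open>a > 0\<close> \<open>b > 0\<close> by (simp add: field_simps real_sqrt_mult[symmetric] real_sqrt_mult_self)
  then show ?thesis
    using le[of "sqrt a / sqrt b"] \<open>a > 0\<close> \<open>b > 0\<close> by simp
qed

lemma Cauchy_Schwarz_integral:
  fixes X Y :: "'x \<Rightarrow> real"
  assumes "X \<in> borel_measurable M" "Y \<in> borel_measurable M"
    and X2: "integrable M (\<lambda>x. (X x)\<^sup>2)" and Y2: "integrable M (\<lambda>x. (Y x)\<^sup>2)"
  shows "integrable M (\<lambda>x. X x * Y x)"
    "(\<integral>x. X x * Y x \<partial>M) \<le> sqrt (\<integral>x. (X x)\<^sup>2 \<partial>M) * sqrt (\<integral>x. (Y x)\<^sup>2 \<partial>M)"
proof -
  have XY_le: "norm (X x * Y x) \<le> norm (((X x)\<^sup>2 + (Y x)\<^sup>2) / 2)" for x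
    using mult_le_weighted_squares[of 1 "\<bar>X x\<bar>" "\<bar>Y x\<bar>"] by (simp add: abs_mult)
  show XY: "integrable M (\<lambda>x. X x * Y x)"
  proof (rule Bochner_Integration.integrable_bound)
    show "integrable M (\<lambda>x. ((X x)\<^sup>2 + (Y x)\<^sup>2) / 2)"
      using X2 Y2 by simp
    show "(\<lambda>x. X x * Y x) \<in> borel_measurable M"
      using assms(1,2) by simp
  qed (use XY_le in \<open>auto intro: AE_I2\<close>)
  show "(\<integral>x. X x * Y x \<partial>M) \<le> sqrt (\<integral>x. (X x)\<^sup>2 \<partial>M) * sqrt (\<integral>x. (Y x)\<^sup>2 \<partial>M)"
  proof (rule le_sqrt_mult_if_le_weighted_means)
    fix t :: real
    assume "t > 0"
    then have "(\<integral>x. X x * Y x \<partial>M) \<le> (\<integral>x. ((X x)\<^sup>2 / t + t * (Y x)\<^sup>2) / 2 \<partial>M)"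
      using XY X2 Y2 mult_le_weighted_squares by (intro integral_mono) auto
    then show "(\<integral>x. X x * Y x \<partial>M) \<le> ((\<integral>x. (X x)\<^sup>2 \<partial>M) / t + t * (\<integral>x. (Y x)\<^sup>2 \<partial>M)) / 2"
      using X2 Y2 by simp
  qed simp_all
qed
lemma haar_integral_norms_phi_contract_le:
  fixes \<mu> :: "(complex^'a::finite^'a) measure" and v w :: "complex^('a \<times> 'c::finite \<times> 'a \<times> 'e::finite)"
  assumes h: "is_haar \<mu>"
  shows "integrable \<mu> (\<lambda>U. norm (phi_contract U v) * norm (phi_contract U w))"
    "(\<integral>U. norm (phi_contract U v) * norm (phi_contract U w) \<partial>\<mu>) \<le> norm v * norm w / (real CARD('a))\<^sup>2"
proof -
  have meas: "(\<lambda>U. norm (phi_contract U x)) \<in> borel_measurable \<mu>" for x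
    by (intro haar_borel_measurable_continuous[OF h] continuous_on_norm continuous_on_phi_contract)
  note CS = Cauchy_Schwarz_integral[OF meas meas haar_second_moment_phi_contract(1)[OF h]
      haar_second_moment_phi_contract(1)[OF h]]
  show "integrable \<mu> (\<lambda>U. norm (phi_contract U v) * norm (phi_contract U w))"
    by (rule CS)
  show "(\<integral>U. norm (phi_contract U v) * norm (phi_contract U w) \<partial>\<mu>) \<le> norm v * norm w / (real CARD('a))\<^sup>2"
  proof -
    have "sqrt ((norm x / real CARD('a))\<^sup>2) = norm x / real CARD('a)" for x :: "complex^('a \<times> 'c \<times> 'a \<times> 'e)"
      by simp
    then show ?thesis
      using CS(2)[of v w] unfolding haar_second_moment_phi_contract(2)[OF h]
      by (simp add: power2_eq_square)
  qed
qed

lemma trace_norm_Theta_dominated: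
  fixes Y :: "complex^('a::finite \<times> 'c::finite \<times> 'a \<times> 'e::finite)^('a \<times> 'c \<times> 'a \<times> 'e)"
    and \<mu> :: "(complex^'a^'a) measure"
  assumes h: "is_haar \<mu>"
  obtains B where "integrable \<mu> B" "\<And>U. trace_norm (Theta Y U) \<le> B U" "(\<integral>U. B U \<partial>\<mu>) \<le> trace_norm Y"
proof -
  obtain g where g: "onb g" and tn: "trace_norm Y = (\<Sum>j\<in>UNIV. norm (Y *v g j))"
    and "\<forall>i j. i \<noteq> j \<longrightarrow> hinner (Y *v g i) (Y *v g j) = 0"
    by (rule trace_norm_singular_basis[of Y])
  define d where "d = real CARD('a)"
  define B where "B U = d\<^sup>2 * (\<Sum>j\<in>UNIV. norm (phi_contract U (Y *v g j)) * norm (phi_contract U (g j)))"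
    for U
  note moments = haar_integral_norms_phi_contract_le[OF h]
  have "integrable \<mu> (\<lambda>U. \<Sum>j\<in>UNIV. norm (phi_contract U (Y *v g j)) * norm (phi_contract U (g j)))"
    by (intro Bochner_Integration.integrable_sum moments(1))
  then have "integrable \<mu> B"
    unfolding B_def by simp
  moreover have "trace_norm (Theta Y U) \<le> B U" for U
    unfolding B_def d_def by (rule trace_norm_Theta_le[OF g])
  moreover have "(\<integral>U. B U \<partial>\<mu>) \<le> trace_norm Y"
  proof -
    have "(\<integral>U. B U \<partial>\<mu>)
        = d\<^sup>2 * (\<Sum>j\<in>UNIV. \<integral>U. norm (phi_contract U (Y *v g j)) * norm (phi_contract U (g j)) \<partial>\<mu>)"
      unfolding B_def by (simp add: Bochner_Integration.integral_sum moments(1))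
    also have "\<dots> \<le> d\<^sup>2 * (\<Sum>j\<in>UNIV. norm (Y *v g j) * norm (g j) / d\<^sup>2)"
      unfolding d_def using moments(2) by (intro mult_left_mono sum_mono) auto
    also have "\<dots> = trace_norm Y"
      using g by (simp add: tn onb_norm d_def flip: sum_divide_distrib)
    finally show ?thesis .
  qed
  ultimately show ?thesis
    using that by blast
qed

theorem lemma3p3:
  fixes Y :: "complex^('a::finite \<times> 'c::finite \<times> 'a \<times> 'e::finite)^('a \<times> 'c \<times> 'a \<times> 'e)"
    and \<mu> :: "(complex^'a^'a) measure"
  assumes "is_haar \<mu>"
  shows "(\<integral>U. trace_norm (Theta Y U) \<partial>\<mu>) \<le> trace_norm Y \<and>
         (\<integral>U. trace_norm (Theta Y U - (\<integral>V. Theta Y V \<partial>\<mu>)) \<partial>\<mu>) \<le> 2 * trace_norm Y"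
proof -
  obtain B where B: "integrable \<mu> B" and Theta_le: "\<And>U. trace_norm (Theta Y U) \<le> B U"
    and mean: "(\<integral>U. B U \<partial>\<mu>) \<le> trace_norm Y"
    using trace_norm_Theta_dominated[OF assms] by blast
  have B_nonneg: "0 \<le> B U" for U
    using Theta_le trace_norm_nonneg order_trans by blast
  have diff_le: "trace_norm (Theta Y U - (\<integral>V. Theta Y V \<partial>\<mu>)) \<le> B U + (\<integral>V. B V \<partial>\<mu>)" for U
    using trace_norm_diff_le[of "Theta Y U" "\<integral>V. Theta Y V \<partial>\<mu>"]
      trace_norm_integral_le[OF B Theta_le] Theta_le[of U]
    by linarith
  have const: "integrable \<mu> (\<lambda>U. \<integral>V. B V \<partial>\<mu>)"
    using prob_space.finite_measure[OF is_haarD(1)[OF assms]] by (rule finite_measure.integrable_const)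
  have "(\<integral>U. trace_norm (Theta Y U - (\<integral>V. Theta Y V \<partial>\<mu>)) \<partial>\<mu>)
      \<le> (\<integral>U. B U + (\<integral>V. B V \<partial>\<mu>) \<partial>\<mu>)"
    using B const diff_le B_nonneg integral_nonneg by (intro integral_mono') auto
  also have "\<dots> = (\<integral>U. B U \<partial>\<mu>) + (\<integral>U. (\<integral>V. B V \<partial>\<mu>) \<partial>\<mu>)"
    by (rule Bochner_Integration.integral_add[OF B const])
  also have "\<dots> = 2 * (\<integral>U. B U \<partial>\<mu>)"
    using prob_space.prob_space[OF is_haarD(1)[OF assms]] by simp
  finally show ?thesis
    using integral_mono'[OF B Theta_le B_nonneg] mean by linarith
qed

end
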